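(* Let $c,d>0$ with $cd\le1$ and $g(x)=xF(c,d;c+d;x)$ for $x\in(0,1)$. Then for all $s,p,q>0$, $$g\!\left(\frac{s^p}{1+s^p}\right)+g\!\left(\frac{s^q}{1+s^q}\right)\ge g\!\left(\frac{s^{p+q}}{1+s^{p+q}}\right).$$
   Context: $F(a,b;c;x)$ is the Gaussian hypergeometric function $\sum_{n\ge0}\frac{(a)_n(b)_n}{(c)_n}\frac{x^n}{n!}$ ($|x|<1$), with $(a)_n=a(a+1)\cdots(a+n-1)$, $(a)_0=1$. *)

theory Defs
  imports "HOL-Analysis.Analysis"
begin

definition hyp2F1 :: "real \<Rightarrow> real \<Rightarrow> real \<Rightarrow> real \<Rightarrow> real" where
  "hyp2F1 a b c x = (\<Sum>n. pochhammer a n * pochhammer b n / pochhammer c n * x ^ n / fact n)"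

end

theory Submission
  imports Defs
begin

(* Write g(x) = x F(c,d;c+d;x) = \<Sum>n a_n x^(n+1) with a_n the hypergeometric
   coefficients, and substitute x = 1 - e^(-v), i.e. v = ln(1+A) for x = A/(1+A).  The
   function  \<phi>(v) = g(1 - e^(-v))  has \<phi>(0) = 0 and derivative  (1-x) g'(x)  at x = 1 - e^(-v).
   The coefficients of g'(x) = \<Sum> (n+1) a_n x^n decrease when cd \<le> 1, and a power
   series with nonnegative decreasing coefficients stays nonincreasing after multiplication by
   (1-x); hence \<phi>' \<ge> 0 is nonincreasing, so \<phi> is monotone and subadditive on [0,\<infinity>).  Since
   ln(1+AB) \<le> ln(1+A) + ln(1+B), this gives  g(AB/(1+AB)) \<le> g(A/(1+A)) + g(B/(1+B)),
   and the theorem is the case A = s^p, B = s^q. *)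

lemma summable_bounded_coeffs:
  fixes f :: "nat \<Rightarrow> real"
  assumes "\<And>n. \<bar>f n\<bar> \<le> B" and "\<bar>t\<bar> < 1"
  shows "summable (\<lambda>n. f n * t ^ n)"
proof (rule summable_comparison_test'[of "\<lambda>n. B * \<bar>t\<bar> ^ n" 0])
  show "summable (\<lambda>n. B * \<bar>t\<bar> ^ n)"
    using assms(2) by (intro summable_mult summable_geometric) auto
  show "norm (f n * t ^ n) \<le> B * \<bar>t\<bar> ^ n" for n
    using assms(1)[of n] by (simp add: abs_mult power_abs mult_right_mono)
qed

text \<open>If the coefficients r_n are nonnegative and decreasing, then (1-t) \<Sum> r_n t^n is
  nonincreasing on [0,1): its coefficients r_n - r_(n-1) are nonpositive for n \<ge> 1.\<close>
lemma damped_decreasing_series_antimono: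
  fixes r :: "nat \<Rightarrow> real"
  assumes r_nonneg: "\<And>n. 0 \<le> r n" and r_dec: "decseq r"
    and "0 \<le> s" and "s \<le> t" and "t < 1"
  shows "(1 - t) * (\<Sum>n. r n * t ^ n) \<le> (1 - s) * (\<Sum>n. r n * s ^ n)"
proof -
  define \<delta> where "\<delta> n = r n - (case n of 0 \<Rightarrow> 0 | Suc m \<Rightarrow> r m)" for n
  have r_bounded: "\<bar>r n\<bar> \<le> r 0" for n
    using r_nonneg[of n] decseqD[OF r_dec, of 0 n] by simp
  have damped_sums: "(\<lambda>n. \<delta> n * x ^ n) sums ((1 - x) * (\<Sum>n. r n * x ^ n))"
    if "\<bar>x\<bar> < 1" for x
  proof -
    have S: "(\<lambda>n. r n * x ^ n) sums (\<Sum>n. r n * x ^ n)"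
      using summable_bounded_coeffs[OF r_bounded that] by (rule summable_sums)
    define e where "e n = (case n of 0 \<Rightarrow> 0 | Suc m \<Rightarrow> r m * x ^ n)" for n
    have "(\<lambda>n. e (Suc n)) sums (x * (\<Sum>n. r n * x ^ n))"
      using sums_mult[OF S, of x] by (simp add: e_def mult_ac)
    then have "e sums (x * (\<Sum>n. r n * x ^ n))"
      by (subst (asm) sums_Suc_iff) (simp add: e_def)
    moreover have "(\<lambda>n. r n * x ^ n - e n) = (\<lambda>n. \<delta> n * x ^ n)"
      by (rule ext) (simp add: \<delta>_def e_def algebra_simps split: nat.split)
    ultimately have "(\<lambda>n. \<delta> n * x ^ n) sums ((\<Sum>n. r n * x ^ n) - x * (\<Sum>n. r n * x ^ n))"
      using sums_diff[OF S] by metis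
    then show ?thesis by (simp add: left_diff_distrib)
  qed
  have "\<delta> n * t ^ n \<le> \<delta> n * s ^ n" for n
  proof (cases n)
    case (Suc m)
    then have "\<delta> n \<le> 0" using decseqD[OF r_dec, of m n] by (simp add: \<delta>_def)
    moreover have "s ^ n \<le> t ^ n" using assms by (intro power_mono) auto
    ultimately show ?thesis by (simp add: mult_left_mono_neg)
  qed simp
  then show ?thesis
    by (rule sums_le) (use assms in \<open>auto intro!: damped_sums\<close>)
qed

lemma subadditive_if_derivative_antimono:
  fixes \<phi> \<phi>' :: "real \<Rightarrow> real"
  assumes \<phi>0: "\<phi> 0 = 0"
    and deriv: "\<And>v. 0 \<le> v \<Longrightarrow> (\<phi> has_real_derivative \<phi>' v) (at v)"
    and deriv_nonneg: "\<And>v. 0 \<le> v \<Longrightarrow> 0 \<le> \<phi>' v"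
    and deriv_antimono: "\<And>u v. 0 \<le> u \<Longrightarrow> u \<le> v \<Longrightarrow> \<phi>' v \<le> \<phi>' u"
    and "0 \<le> x" and "0 \<le> y" and "0 \<le> z" and "z \<le> x + y"
  shows "\<phi> z \<le> \<phi> x + \<phi> y"
proof -
  have "\<phi> z \<le> \<phi> (x + y)"
  proof (rule DERIV_nonneg_imp_nondecreasing[OF \<open>z \<le> x + y\<close>])
    fix u assume "z \<le> u"
    then have "0 \<le> u" using \<open>0 \<le> z\<close> by simp
    then show "\<exists>D. (\<phi> has_real_derivative D) (at u) \<and> 0 \<le> D"
      using deriv deriv_nonneg by blast
  qed
  also have "\<phi> (x + y) - \<phi> x \<le> \<phi> (0 + y) - \<phi> 0"
  proof (rule DERIV_nonpos_imp_nonincreasing[OF \<open>0 \<le> x\<close>])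
    fix u assume "0 \<le> u" "u \<le> x"
    have "((\<lambda>u. \<phi> (u + y) - \<phi> u) has_real_derivative \<phi>' (u + y) - \<phi>' u) (at u)"
      using DERIV_chain2[OF deriv DERIV_add[OF DERIV_ident DERIV_const], of u y]
        deriv[of u] \<open>0 \<le> u\<close> \<open>0 \<le> y\<close>
      by (intro DERIV_diff) auto
    moreover have "\<phi>' (u + y) - \<phi>' u \<le> 0"
      using deriv_antimono[of u "u + y"] \<open>0 \<le> u\<close> \<open>0 \<le> y\<close> by simp
    ultimately show "\<exists>D. ((\<lambda>u. \<phi> (u + y) - \<phi> u) has_real_derivative D) (at u) \<and> D \<le> 0"
      by blast
  qed
  then have "\<phi> (x + y) \<le> \<phi> x + \<phi> y" using \<phi>0 by simp
  finally show ?thesis .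
qed

text \<open>The logarithmic inequality behind the change of variables x = A/(1+A) = 1 - e^(-ln(1+A)).\<close>
lemma ln_one_plus_mult_le:
  fixes A B :: real
  assumes "0 \<le> A" and "0 \<le> B"
  shows "ln (1 + A * B) \<le> ln (1 + A) + ln (1 + B)"
proof -
  have "1 + A * B \<le> (1 + A) * (1 + B)" using assms by (simp add: algebra_simps)
  then have "ln (1 + A * B) \<le> ln ((1 + A) * (1 + B))"
    using assms by (subst ln_le_cancel_iff) (auto intro: add_pos_nonneg)
  also have "\<dots> = ln (1 + A) + ln (1 + B)" using assms by (simp add: ln_mult)
  finally show ?thesis .
qed

lemma ratio_as_exp_ln:
  fixes A :: real
  assumes "0 \<le> A"
  shows "A / (1 + A) = 1 - exp (- ln (1 + A))"
  using assms by (simp add: exp_minus field_simps)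

text \<open>The series x \<Sum> a_n x^n, written as a power series with shifted coefficients so that
  termwise differentiation applies directly.\<close>
definition shifted_series :: "(nat \<Rightarrow> real) \<Rightarrow> real \<Rightarrow> real" where
  "shifted_series a x = (\<Sum>n. (case n of 0 \<Rightarrow> 0 | Suc m \<Rightarrow> a m) * x ^ n)"

context
  fixes a :: "nat \<Rightarrow> real"
  assumes coeff_nonneg: "\<And>n. 0 \<le> a n"
    and weighted_coeff_dec: "decseq (\<lambda>n. real (Suc n) * a n)"
begin

lemma coeff_bounded: "\<bar>a n\<bar> \<le> a 0"
proof -
  have "a n \<le> real (Suc n) * a n" using coeff_nonneg[of n] by (simp add: algebra_simps)
  also have "\<dots> \<le> real (Suc 0) * a 0" using decseqD[OF weighted_coeff_dec, of 0 n] by simp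
  finally show ?thesis using coeff_nonneg[of n] by simp
qed

lemma weighted_coeff_bounded: "\<bar>real (Suc n) * a n\<bar> \<le> a 0"
  using decseqD[OF weighted_coeff_dec, of 0 n] coeff_nonneg[of n] by simp

lemma shifted_series_eq:
  assumes "\<bar>x\<bar> < 1"
  shows "shifted_series a x = x * (\<Sum>n. a n * x ^ n)"
proof -
  have "(\<lambda>n. a n * x ^ n) sums (\<Sum>n. a n * x ^ n)"
    using summable_bounded_coeffs[OF coeff_bounded assms] by (rule summable_sums)
  from sums_mult[OF this, of x]
  have "(\<lambda>n. (case Suc n of 0 \<Rightarrow> 0 | Suc m \<Rightarrow> a m) * x ^ Suc n) sums (x * (\<Sum>n. a n * x ^ n))"
    by (simp add: mult_ac)
  then show ?thesis
    unfolding shifted_series_def by (subst (asm) sums_Suc_iff) (simp add: sums_iff)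
qed

lemma shifted_series_deriv:
  assumes "\<bar>x\<bar> < 1"
  shows "(shifted_series a has_real_derivative (\<Sum>n. real (Suc n) * a n * x ^ n)) (at x)"
proof -
  have "summable (\<lambda>n. (case n of 0 \<Rightarrow> 0 | Suc m \<Rightarrow> a m) * y ^ n)" if "norm y < 1" for y
    using that coeff_bounded coeff_nonneg
    by (intro summable_bounded_coeffs[where B = "a 0"]) (auto split: nat.splits)
  from termdiffs_strong'[OF this assms[folded real_norm_def]]
  have "(shifted_series a has_real_derivative
          (\<Sum>n. diffs (\<lambda>n. case n of 0 \<Rightarrow> 0 | Suc m \<Rightarrow> a m) n * x ^ n)) (at x)"
    by (simp add: shifted_series_def[abs_def])
  then show ?thesis by (simp add: diffs_def)
qed

lemma shifted_series_exp_deriv: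
  assumes "0 \<le> v"
  shows "((\<lambda>v. shifted_series a (1 - exp (- v))) has_real_derivative
           (1 - (1 - exp (- v))) * (\<Sum>n. real (Suc n) * a n * (1 - exp (- v)) ^ n)) (at v)"
proof -
  have "\<bar>1 - exp (- v)\<bar> < 1" using assms by (auto simp: abs_if)
  moreover have "((\<lambda>v. 1 - exp (- v)) has_real_derivative exp (- v)) (at v)"
    by (auto intro!: derivative_eq_intros)
  ultimately show ?thesis
    using DERIV_chain2[OF shifted_series_deriv] by (simp add: mult_ac)
qed

theorem shifted_series_ratio_subadditive:
  assumes "0 \<le> A" and "0 \<le> B"
  shows "shifted_series a (A * B / (1 + A * B))
           \<le> shifted_series a (A / (1 + A)) + shifted_series a (B / (1 + B))"
proof -
  define \<phi> where "\<phi> v = shifted_series a (1 - exp (- v))" for v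
  define \<phi>' where "\<phi>' v = (1 - (1 - exp (- v))) * (\<Sum>n. real (Suc n) * a n * (1 - exp (- v)) ^ n)"
    for v
  have weighted_nonneg: "0 \<le> real (Suc n) * a n" for n using coeff_nonneg[of n] by simp
  have "\<phi> (ln (1 + A * B)) \<le> \<phi> (ln (1 + A)) + \<phi> (ln (1 + B))"
  proof (rule subadditive_if_derivative_antimono[where \<phi> = \<phi> and \<phi>' = \<phi>'])
    show "\<phi> 0 = 0" by (simp add: \<phi>_def shifted_series_def)
    show "(\<phi> has_real_derivative \<phi>' v) (at v)" if "0 \<le> v" for v
      using shifted_series_exp_deriv[OF that] by (simp add: \<phi>_def[abs_def] \<phi>'_def)
    show "0 \<le> \<phi>' v" if "0 \<le> v" for v
      unfolding \<phi>'_def using that coeff_nonneg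
      by (intro mult_nonneg_nonneg suminf_nonneg summable_bounded_coeffs[OF weighted_coeff_bounded])
        (auto simp: abs_if)
    show "\<phi>' v \<le> \<phi>' u" if "0 \<le> u" "u \<le> v" for u v
      unfolding \<phi>'_def using that weighted_nonneg
      by (intro damped_decreasing_series_antimono[OF _ weighted_coeff_dec,
            unfolded mult.assoc[symmetric]]) auto
  qed (use assms ln_one_plus_mult_le in auto)
  then show ?thesis
    using assms by (simp add: \<phi>_def ratio_as_exp_ln)
qed

end

definition hyp_coeff :: "real \<Rightarrow> real \<Rightarrow> real \<Rightarrow> nat \<Rightarrow> real" where
  "hyp_coeff a b c n = pochhammer a n * pochhammer b n / pochhammer c n / fact n"

lemma hyp2F1_as_series: "hyp2F1 a b c x = (\<Sum>n. hyp_coeff a b c n * x ^ n)"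
  by (simp add: hyp2F1_def hyp_coeff_def)

lemma hyp_coeff_pos: "0 < a \<Longrightarrow> 0 < b \<Longrightarrow> 0 < c \<Longrightarrow> 0 < hyp_coeff a b c n"
  by (simp add: hyp_coeff_def pochhammer_pos)

lemma hyp_coeff_Suc:
  "hyp_coeff a b c (Suc n) = hyp_coeff a b c n * ((a + n) * (b + n) / ((c + n) * (n + 1)))"
  by (simp add: hyp_coeff_def pochhammer_Suc field_simps)

text \<open>For c = a + b the weighted coefficients (n+1) hyp_coeff decrease because
  ab \<le> 1: the ratio of consecutive ones is (n+2)(a+n)(b+n) / ((n+1)^2 (a+b+n)).\<close>
lemma hyp_weighted_coeff_decseq:
  fixes a b :: real
  assumes "0 < a" and "0 < b" and "a * b \<le> 1"
  shows "decseq (\<lambda>n. real (Suc n) * hyp_coeff a b (a + b) n)"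
proof (rule decseq_SucI)
  fix n :: nat
  have am_gm: "2 * (a * b) \<le> a + b"
  proof -
    have "(2 * (a * b))\<^sup>2 \<le> 4 * (a * b)"
      using assms mult_left_mono[OF \<open>a * b \<le> 1\<close>, of "a * b"] by (simp add: power2_eq_square)
    also have "\<dots> \<le> (a + b)\<^sup>2"
      using zero_le_power2[of "a - b"] by (simp add: power2_eq_square algebra_simps)
    finally show ?thesis by (rule power2_le_imp_le) (use assms in simp)
  qed
  have ratio_le: "(n + 2) * ((a + n) * (b + n)) \<le> (n + 1) * (n + 1) * (a + b + n)"
  proof -
    have "(n + 2) * ((a + n) * (b + n)) - (n + 1) * (n + 1) * (a + b + n)
          = (a * b - 1) * n + (2 * (a * b) - a - b)"
      by (simp add: algebra_simps)
    moreover have "(a * b - 1) * n \<le> 0" using assms by (intro mult_nonpos_nonneg) auto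
    ultimately show ?thesis using am_gm by linarith
  qed
  have pos: "0 < (a + b + n) * (n + 1)" using assms by simp
  have h_pos: "0 < hyp_coeff a b (a + b) n" using assms by (simp add: hyp_coeff_pos)
  have "real (Suc (Suc n)) * hyp_coeff a b (a + b) (Suc n)
        = hyp_coeff a b (a + b) n * ((n + 2) * ((a + n) * (b + n)) / ((a + b + n) * (n + 1)))"
    by (simp add: hyp_coeff_Suc field_simps)
  also have "\<dots> \<le> hyp_coeff a b (a + b) n * ((n + 1) * (n + 1) * (a + b + n) / ((a + b + n) * (n + 1)))"
    using h_pos pos ratio_le by (intro mult_left_mono divide_right_mono) auto
  also have "\<dots> = real (Suc n) * hyp_coeff a b (a + b) n" using pos by (simp add: field_simps)
  finally show "real (Suc (Suc n)) * hyp_coeff a b (a + b) (Suc n)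
                  \<le> real (Suc n) * hyp_coeff a b (a + b) n" .
qed

theorem mainTheorem10:
  fixes c d s p q :: real and g :: "real \<Rightarrow> real"
  assumes "c > 0" and "d > 0" and "c * d \<le> 1"
    and "\<And>x. 0 < x \<Longrightarrow> x < 1 \<Longrightarrow> g x = x * hyp2F1 c d (c + d) x"
    and "s > 0" and "p > 0" and "q > 0"
  shows "g (s powr p / (1 + s powr p)) + g (s powr q / (1 + s powr q))
           \<ge> g (s powr (p + q) / (1 + s powr (p + q)))"
proof -
  let ?a = "hyp_coeff c d (c + d)"
  have nonneg: "0 \<le> ?a n" for n using assms(1,2) hyp_coeff_pos[of c d "c + d" n] by simp
  note dec = hyp_weighted_coeff_decseq[OF assms(1-3)]
  have g_eq: "g (A / (1 + A)) = shifted_series ?a (A / (1 + A))" if "0 < A" for A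
  proof -
    have "0 < A / (1 + A)" "A / (1 + A) < 1" using that by auto
    then show ?thesis
      using assms(4) shifted_series_eq[OF nonneg dec, of "A / (1 + A)"]
      by (simp only: hyp2F1_as_series abs_less_iff) simp
  qed
  have A: "0 < s powr p" and B: "0 < s powr q" using assms(5) by auto
  have "s powr (p + q) = s powr p * s powr q" by (simp add: powr_add)
  then show ?thesis
    using shifted_series_ratio_subadditive[OF nonneg dec, of "s powr p" "s powr q"] A B
    by (simp add: g_eq)
qed

end
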